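(* Let $d\geq 3$ be an integer and let $\rho_d^{(w)}=\frac{d+1}{d^3}I_{\mathbb{C}^d\otimes\mathbb{C}^d}-\frac{1}{d^2}V_d$ be the Werner state on $\mathbb{C}^d\otimes\mathbb{C}^d$, where $V_d$ is the flip operator, $V_d(\psi_1\otimes\psi_2)=\psi_2\otimes\psi_1$. Then for any three self-adjoint operators $J^{(a)},J^{(b_1)},J^{(b_2)}$ on $\mathbb{C}^d$ with operator norms $\|J^{(a)}\|,\|J^{(b_1)}\|,\|J^{(b_2)}\|\leq 1$, $$\Big|\,\mathrm{tr}\big[\rho_d^{(w)}(J^{(a)}\otimes J^{(b_1)})\big]-\mathrm{tr}\big[\rho_d^{(w)}(J^{(a)}\otimes J^{(b_2)})\big]\,\Big|\leq 1-\mathrm{tr}\big[\rho_d^{(w)}(J^{(b_1)}\otimes J^{(b_2)})\big].$$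
   Context: This is the perfect correlation form of the original Bell inequality for the Werner state; no assumption of perfect correlation $\mathrm{tr}[\rho_d^{(w)}(J^{(b_1)}\otimes J^{(b_1)})]=1$ is made. *)

theory Defs
  imports "HOL-Analysis.Analysis"
begin

text \<open>Matrices on C^n are complex^'n^'n (row index first); C^n (x) C^n is indexed by 'n \<times> 'n.\<close>

definition kron :: "complex^'n::finite^'n \<Rightarrow> complex^'m::finite^'m \<Rightarrow> complex^('n \<times> 'm)^('n \<times> 'm)" where
  "kron A B = (\<chi> p q. A $ fst p $ fst q * B $ snd p $ snd q)"

definition flip_op :: "complex^('n::finite \<times> 'n)^('n \<times> 'n)" where
  "flip_op = (\<chi> p q. if fst p = snd q \<and> snd p = fst q then 1 else 0)"

definition werner :: "complex^('n::finite \<times> 'n)^('n \<times> 'n)" where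
  "werner = (let d = complex_of_nat CARD('n) in
     (\<chi> p q. (d + 1) / d ^ 3 * (mat 1 :: complex^('n \<times> 'n)^('n \<times> 'n)) $ p $ q
             - 1 / d ^ 2 * (flip_op :: complex^('n \<times> 'n)^('n \<times> 'n)) $ p $ q))"

definition self_adjoint :: "complex^'n::finite^'n \<Rightarrow> bool" where
  "self_adjoint A \<longleftrightarrow> (\<forall>i j. A $ i $ j = cnj (A $ j $ i))"

definition op_norm :: "complex^'n::finite^'n \<Rightarrow> real" where
  "op_norm A = onorm (\<lambda>x. A *v x)"

end

theory Submission
  imports Defs
begin

text \<open>
  Write \<open>A, B, C\<close> for \<open>J^(a), J^(b1), J^(b2)\<close>. Since
  \<open>tr[\<rho>(X \<otimes> Y)] = ((d+1) tr X tr Y - d tr(X Y)) / d\<^sup>3\<close>, only traces of \<open>A, B, C\<close> and of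
  their products matter. In an orthonormal eigenbasis of \<open>B - C\<close> the off-diagonal parts of \<open>B\<close>
  and \<open>C\<close> coincide; so with diagonals \<open>a, y, z \<in> [-1,1]\<^sup>d\<close> the left-hand side depends only on
  \<open>\<Sum>a, \<Sum>y, \<Sum>z, \<Sum>a(y-z)\<close>, while \<open>tr(B C) \<ge> \<Sum>y z\<close> because the off-diagonal terms are
  squared moduli. This leaves a classical inequality on the cube. Splitting \<open>y - z\<close> into
  positive and negative parts of total mass \<open>P\<close> and \<open>N\<close>, its left-hand side is at most
  \<open>\<Sum>\<^sub>i |(d+1)(P-N) - d (y\<^sub>i - z\<^sub>i)|\<close>, which a concavity (chord) argument bounds by
  \<open>d\<^sup>2(P+N) - (d+1)PN\<close> when \<open>d \<ge> 3\<close>. The right-hand side is at least the same quantity,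
  because \<open>(d+1)(\<Sum>s)\<^sup>2 - d\<Sum>s\<^sup>2\<close> can only grow when each \<open>|s\<^sub>i|\<close> is raised to some
  \<open>w\<^sub>i\<close>; take \<open>s = y + z\<close> and \<open>w = 2 - |y - z|\<close>.
\<close>

section \<open>A classical inequality on the cube\<close>

lemma min_ge_chord:
  fixes A B d m p n :: real
  assumes "B \<le> A" "0 \<le> d" "0 \<le> p" "p \<le> m" "0 < m" "0 \<le> n" "p = 0 \<or> n = 0"
  shows "B - d * n - p * (max 0 (B - (A - d * m)) / m) \<le> min (A - d * p) (B - d * n)"
proof (cases "B \<le> A - d * p")
  case True
  have "0 \<le> d * n" "0 \<le> p * (max 0 (B - (A - d * m)) / m)" using assms by simp_all
  then show ?thesis using True by linarith
next
  case False
  then have "n = 0" using assms by auto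
  have "d * p \<le> d * m" using assms by (simp add: mult_left_mono)
  then have max: "max 0 (B - (A - d * m)) = B - A + d * m" using False by simp
  have "(B - A) * (1 - p / m) \<le> 0"
    using assms by (simp add: mult_nonpos_nonneg)
  then show ?thesis
    unfolding max using False \<open>n = 0\<close> \<open>0 < m\<close> by (simp add: field_simps)
qed

lemma chord_slope_polynomial_nonneg:
  fixes d P N :: real
  assumes d3: "d \<ge> 3" and P2: "P > 2" and Pd: "P \<le> 2*(d-1)" and N0: "N \<ge> 0" and NP: "N \<le> P"
    and PN: "P + N \<le> 2*d" and lt: "(d+1)*(P-N) < 2*d"
  shows "2*d^2*N - 2*d*P + (d+1)*P^2 - 2*(d+1)*P*N \<ge> 0"
proof -
  consider "(d+1)*P \<le> d^2" | "(d+1)*P > d^2" "P \<le> d" | "P > d" by linarith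
  then show ?thesis
  proof cases
    case 1
    have e: "(d+1)*(2*d^2*N - 2*d*P + (d+1)*P^2 - 2*(d+1)*P*N)
       = 2*((d+1)*N - ((d+1)*P - 2*d))*(d^2 - (d+1)*P) + ((d+1)*P - 2*d)*(2*d^2 - (d+1)*P)"
      by (simp add: algebra_simps power2_eq_square)
    have "(d+1)*P \<ge> (d+1)*2" using P2 d3 by (intro mult_left_mono) auto
    then have "(d+1)*(2*d^2*N - 2*d*P + (d+1)*P^2 - 2*(d+1)*P*N) \<ge> 0"
      unfolding e using lt 1 d3 by (intro add_nonneg_nonneg mult_nonneg_nonneg) (auto simp: algebra_simps)
    then show ?thesis using d3 by (simp add: zero_le_mult_iff)
  next
    case 2
    have e: "2*d^2*N - 2*d*P + (d+1)*P^2 - 2*(d+1)*P*N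
       = 2*(P - N)*((d+1)*P - d^2) + P*(2*d^2 - 2*d - (d+1)*P)"
      by (simp add: algebra_simps power2_eq_square)
    have "(d+1)*P \<le> (d+1)*d" using 2 d3 by (intro mult_left_mono) auto
    then have "2*d^2 - 2*d - (d+1)*P \<ge> d*(d-3)" by (simp add: algebra_simps power2_eq_square)
    moreover have "d*(d-3) \<ge> 0" using d3 by simp
    ultimately show ?thesis unfolding e using 2 NP P2 by (intro add_nonneg_nonneg mult_nonneg_nonneg) auto
  next
    case 3
    have e: "2*d^2*N - 2*d*P + (d+1)*P^2 - 2*(d+1)*P*N
       = 2*(2*d - P - N)*((d+1)*P - d^2) + 3*(d+1)*(P-d)^2 + d^2*(d-3)"
      by (simp add: algebra_simps power2_eq_square)
    have "(d+1)*P \<ge> (d+1)*d" using 3 d3 by (intro mult_left_mono) auto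
    then have "(d+1)*P - d^2 \<ge> 0" using d3 by (simp add: algebra_simps power2_eq_square)
    then show ?thesis unfolding e using PN d3 by (intro add_nonneg_nonneg mult_nonneg_nonneg) auto
  qed
qed

lemma chord_slope_bound:
  fixes d P N :: real
  assumes d3: "3 \<le> d" and N: "0 < N" "N \<le> P" and P: "P \<le> 2*(d-1)" "P + N \<le> 2*d"
  defines "m \<equiv> min 2 P"
  shows "(d+1)*P*N \<le> 2*(d^2*N - P * (max 0 ((d+1)*N - ((d+1)*P - d*m)) / m))"
proof (cases "P \<le> 2")
  case True
  have "(d+1)*P \<le> (d+1)*2" using True d3 by (intro mult_left_mono) auto
  then have PN2: "(d+1)*P*N \<le> 2*(d+1)*N" using N by (simp add: mult_right_mono mult.commute)
  have "3*d \<le> d*d" using d3 by (intro mult_right_mono) auto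
  then have "2*(d+1) \<le> d^2" using d3 unfolding power2_eq_square by argo
  then have dN: "2*(d+1)*N \<le> d^2*N"
    using N by (intro mult_right_mono) auto
  have cost: "P * (max 0 ((d+1)*N - ((d+1)*P - d*m)) / m) = max 0 ((d+1)*N - P)"
    using N True by (simp add: m_def min_def algebra_simps)
  have "(d+1)*P*N \<le> 2*(d^2*N - (d+1)*N)" using PN2 dN by (simp add: algebra_simps)
  also have "\<dots> \<le> 2*(d^2*N - max 0 ((d+1)*N - P))" using N d3 by simp
  finally show ?thesis by (simp only: cost)
next
  case False
  then have cost: "P * (max 0 ((d+1)*N - ((d+1)*P - d*m)) / m) = P * max 0 (2*d - (d+1)*(P - N)) / 2"
    by (simp add: m_def min_def algebra_simps)
  show ?thesis
  proof (cases "(d+1)*(P - N) < 2*d")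
    case True
    then have "max 0 (2*d - (d+1)*(P - N)) = 2*d - (d+1)*(P - N)" by simp
    moreover have "2*(d^2*N - P * (2*d - (d+1)*(P - N)) / 2) - (d+1)*P*N
        = 2*d^2*N - 2*d*P + (d+1)*P^2 - 2*(d+1)*P*N"
      by (simp add: field_simps power2_eq_square)
    ultimately show ?thesis
      using chord_slope_polynomial_nonneg[OF d3 _ P(1) _ N(2) P(2) True] \<open>\<not> P \<le> 2\<close> N
      unfolding cost by linarith
  next
    case False
    then have "max 0 (2*d - (d+1)*(P - N)) = 0" by simp
    have "(d+1)*P \<le> (d+1)*(2*(d-1))" using P d3 by (intro mult_left_mono) auto
    then have "(d+1)*P*N \<le> 2*d^2*N" using N by (intro mult_right_mono) (auto simp: algebra_simps power2_eq_square)
    then show ?thesis unfolding cost \<open>max 0 _ = 0\<close> by simp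
  qed
qed

lemma disjoint_support_sum_le:
  fixes n p :: "'n::finite \<Rightarrow> real"
  assumes "0 < sum n UNIV" "\<And>i. 0 \<le> n i" "\<And>i. p i = 0 \<or> n i = 0" "\<And>i. p i \<le> 2"
  shows "sum p UNIV \<le> 2 * (real CARD('n) - 1)"
proof -
  obtain k where "n k \<noteq> 0" using assms(1) by (metis sum.neutral less_irrefl)
  then have pk: "p k = 0" using assms(3) by blast
  have "sum p UNIV = p k + (\<Sum>i\<in>UNIV-{k}. p i)" by (simp add: sum.remove)
  also have "\<dots> \<le> (\<Sum>i\<in>UNIV-{k}. 2)" unfolding pk add_0 by (intro sum_mono assms(4))
  also have "\<dots> = 2 * (real CARD('n) - 1)" by (simp add: card_Diff_singleton_if of_nat_diff)
  finally show ?thesis .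
qed

lemma sum_min_deviation_ge_ordered:
  fixes p n :: "'n::finite \<Rightarrow> real"
  defines "d \<equiv> real CARD('n)" and "P \<equiv> sum p UNIV" and "N \<equiv> sum n UNIV"
  assumes d3: "3 \<le> d" and p0: "\<And>i. 0 \<le> p i" and n0: "\<And>i. 0 \<le> n i"
    and disj: "\<And>i. p i = 0 \<or> n i = 0" and pn2: "\<And>i. p i + n i \<le> 2" and NP: "N \<le> P"
  shows "(d+1)*P*N \<le> 2 * (\<Sum>i\<in>UNIV. min ((d+1)*P - d * p i) ((d+1)*N - d * n i))"
proof (cases "N = 0")
  case True
  have "0 \<le> min ((d+1)*P - d * p i) ((d+1)*N - d * n i)" for i
  proof -
    have "p i \<le> P" "n i \<le> N" unfolding P_def N_def using p0 n0 by (auto intro: member_le_sum)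
    moreover from this have "d * p i \<le> d * P" "d * n i \<le> d * N" using d3 by (intro mult_left_mono; simp)+
    ultimately show ?thesis
      using p0[of i] n0[of i] by (intro min.boundedI) (simp_all add: algebra_simps)
  qed
  then show ?thesis using True by (simp add: sum_nonneg)
next
  case False
  have pP: "p i \<le> P" for i unfolding P_def using p0 by (auto intro: member_le_sum)
  have p2: "p i \<le> 2" for i using pn2[of i] n0[of i] by linarith
  have "N > 0" using False n0 by (simp add: N_def sum_nonneg order_less_le)
  have P_le: "P \<le> 2*(d-1)"
    using disjoint_support_sum_le[of n p] \<open>N > 0\<close> n0 disj p2 unfolding P_def N_def d_def by blast
  have "P + N = (\<Sum>i\<in>UNIV. p i + n i)" unfolding P_def N_def by (simp add: sum.distrib)
  also have "\<dots> \<le> 2*d" using pn2 sum_mono[of UNIV "\<lambda>i. p i + n i" "\<lambda>_. 2"] by (simp add: d_def)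
  finally have PN_le: "P + N \<le> 2*d" .
  \<comment> \<open>\<open>c\<close> is the slope of the chord of the concave map \<open>t \<mapsto> min ((d+1)P - d t) ((d+1)N)\<close>
    over \<open>[0, m]\<close>, an interval containing every \<open>p i\<close>\<close>
  define m where "m = min 2 P"
  define c where "c = max 0 ((d+1)*N - ((d+1)*P - d*m)) / m"
  have m0: "0 < m" using \<open>N > 0\<close> NP by (simp add: m_def)
  have "(d+1)*N \<le> (d+1)*P" using NP d3 by (intro mult_left_mono) auto
  then have per_index: "(d+1)*N - d * n i - c * p i \<le> min ((d+1)*P - d * p i) ((d+1)*N - d * n i)" for i
    using min_ge_chord[of "(d+1)*N" "(d+1)*P" d "p i" m "n i"] pP[of i] p2[of i] d3 p0 n0 disj m0
    by (simp add: c_def m_def mult.commute)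
  have "d^2*N - P*c = (\<Sum>i\<in>UNIV. (d+1)*N - d * n i - c * p i)"
    by (simp add: sum_subtractf sum.distrib sum_distrib_left[symmetric] sum_distrib_right[symmetric]
        P_def N_def d_def algebra_simps power2_eq_square)
  also have "\<dots> \<le> (\<Sum>i\<in>UNIV. min ((d+1)*P - d * p i) ((d+1)*N - d * n i))"
    by (intro sum_mono per_index)
  finally show ?thesis
    using chord_slope_bound[OF d3 \<open>N > 0\<close> NP P_le PN_le] by (simp add: c_def m_def)
qed

lemma sum_abs_deviation_le:
  fixes p n :: "'n::finite \<Rightarrow> real"
  defines "d \<equiv> real CARD('n)" and "P \<equiv> sum p UNIV" and "N \<equiv> sum n UNIV"
  assumes d3: "3 \<le> d" and p0: "\<And>i. 0 \<le> p i" and n0: "\<And>i. 0 \<le> n i"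
    and disj: "\<And>i. p i = 0 \<or> n i = 0" and pn2: "\<And>i. p i + n i \<le> 2"
  shows "(\<Sum>i\<in>UNIV. \<bar>(d+1)*(P - N) - d*(p i - n i)\<bar>) \<le> d^2*(P + N) - (d+1)*P*N"
proof -
  have min_bound: "(d+1)*P*N \<le> 2 * (\<Sum>i\<in>UNIV. min ((d+1)*P - d * p i) ((d+1)*N - d * n i))"
  proof (cases "N \<le> P")
    case True
    then show ?thesis
      using sum_min_deviation_ge_ordered[of p n] d3 p0 n0 disj pn2 unfolding d_def P_def N_def by blast
  next
    case False
    then show ?thesis
      using sum_min_deviation_ge_ordered[of n p] d3 p0 n0 disj pn2
      unfolding d_def P_def N_def by (force simp: min.commute add.commute mult.commute mult.left_commute)
  qed
  have "(\<Sum>i\<in>UNIV. (d+1)*P - d * p i) = d^2*P" "(\<Sum>i\<in>UNIV. (d+1)*N - d * n i) = d^2*N"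
    by (simp_all add: sum_subtractf sum_distrib_left[symmetric] sum_distrib_right[symmetric]
        P_def N_def d_def power2_eq_square algebra_simps)
  moreover have "\<bar>(d+1)*(P - N) - d*(p i - n i)\<bar> = ((d+1)*P - d * p i) + ((d+1)*N - d * n i)
      - 2 * min ((d+1)*P - d * p i) ((d+1)*N - d * n i)" for i
    by (simp add: min_def abs_if algebra_simps)
  ultimately have "(\<Sum>i\<in>UNIV. \<bar>(d+1)*(P - N) - d*(p i - n i)\<bar>)
      = d^2*(P + N) - 2 * (\<Sum>i\<in>UNIV. min ((d+1)*P - d * p i) ((d+1)*N - d * n i))"
    by (simp add: sum_subtractf sum.distrib sum_distrib_left distrib_left)
  then show ?thesis using min_bound by linarith
qed

lemma square_sum_defect_mono:
  fixes s w :: "'i \<Rightarrow> real" and d :: real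
  assumes A: "finite A" and sw: "\<And>i. i \<in> A \<Longrightarrow> \<bar>s i\<bar> \<le> w i" and d0: "0 \<le> d"
  shows "(d+1)*(\<Sum>i\<in>A. s i)^2 - d*(\<Sum>i\<in>A. (s i)^2) \<le> (d+1)*(\<Sum>i\<in>A. w i)^2 - d*(\<Sum>i\<in>A. (w i)^2)"
proof -
  define T where "T = (\<Sum>i\<in>A. \<bar>s i\<bar>)"
  define W where "W = (\<Sum>i\<in>A. w i)"
  have tT: "\<bar>s i\<bar> \<le> T" and wW: "w i \<le> W" if "i \<in> A" for i
    unfolding T_def W_def using A that sw by (auto intro!: member_le_sum) (use abs_ge_zero order_trans in blast)
  have TW: "T \<le> W" unfolding T_def W_def using sw by (rule sum_mono)
  have T0: "0 \<le> T" unfolding T_def by (simp add: sum_nonneg)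
  have "(\<Sum>i\<in>A. s i)^2 \<le> T^2"
    unfolding T_def by (metis abs_ge_zero power2_abs power_mono sum_abs)
  have "(\<Sum>i\<in>A. (w i)^2 - (s i)^2) \<le> (\<Sum>i\<in>A. (w i - \<bar>s i\<bar>) * (W + T))"
  proof (rule sum_mono)
    fix i assume "i \<in> A"
    have "(w i)^2 - (s i)^2 = (w i - \<bar>s i\<bar>) * (w i + \<bar>s i\<bar>)"
      by (simp add: algebra_simps power2_eq_square)
    also have "\<dots> \<le> (w i - \<bar>s i\<bar>) * (W + T)"
      using sw tT wW \<open>i \<in> A\<close> by (intro mult_left_mono add_mono) auto
    finally show "(w i)^2 - (s i)^2 \<le> (w i - \<bar>s i\<bar>) * (W + T)" .
  qed
  also have "\<dots> = W^2 - T^2"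
    unfolding sum_distrib_right[symmetric] sum_subtractf W_def[symmetric] T_def[symmetric]
    by (simp add: algebra_simps power2_eq_square)
  finally have "(\<Sum>i\<in>A. (w i)^2) - (\<Sum>i\<in>A. (s i)^2) \<le> W^2 - T^2"
    by (simp add: sum_subtractf)
  then have "d * ((\<Sum>i\<in>A. (w i)^2) - (\<Sum>i\<in>A. (s i)^2)) \<le> d * (W^2 - T^2)"
    using d0 by (rule mult_left_mono)
  moreover have "(d+1)*(\<Sum>i\<in>A. s i)^2 \<le> (d+1)*T^2"
    using \<open>(\<Sum>i\<in>A. s i)^2 \<le> T^2\<close> d0 by (intro mult_left_mono) auto
  moreover have "T^2 \<le> W^2" using TW T0 by (rule power_mono)
  ultimately show ?thesis unfolding W_def[symmetric] by (simp add: algebra_simps)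
qed

lemma correlation_sum_ge:
  fixes y z :: "'n::finite \<Rightarrow> real"
  defines "d \<equiv> real CARD('n)"
    and "P \<equiv> (\<Sum>i\<in>UNIV. max 0 (y i - z i))" and "N \<equiv> (\<Sum>i\<in>UNIV. max 0 (z i - y i))"
  assumes y1: "\<And>i. \<bar>y i\<bar> \<le> 1" and z1: "\<And>i. \<bar>z i\<bar> \<le> 1"
  shows "d^2*(P + N) - (d+1)*P*N
    \<le> d^3 - (d+1)*(\<Sum>i\<in>UNIV. y i)*(\<Sum>i\<in>UNIV. z i) + d*(\<Sum>i\<in>UNIV. y i * z i)"
proof -
  define L where "L = (\<Sum>i\<in>UNIV. \<bar>y i - z i\<bar>)"
  have L: "L = P + N" unfolding L_def P_def N_def sum.distrib[symmetric]
    by (rule sum.cong) (auto simp: abs_if)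
  have \<Delta>: "(\<Sum>i\<in>UNIV. y i) - (\<Sum>i\<in>UNIV. z i) = P - N"
    unfolding P_def N_def sum_subtractf[symmetric] by (rule sum.cong) (auto simp: max_def)
  have "(d+1)*(\<Sum>i\<in>UNIV. y i + z i)^2 - d*(\<Sum>i\<in>UNIV. (y i + z i)^2)
      \<le> (d+1)*(\<Sum>i\<in>UNIV. 2 - \<bar>y i - z i\<bar>)^2 - d*(\<Sum>i\<in>UNIV. (2 - \<bar>y i - z i\<bar>)^2)"
  proof (rule square_sum_defect_mono)
    show "\<bar>y i + z i\<bar> \<le> 2 - \<bar>y i - z i\<bar>" for i
      using y1[of i] z1[of i] by (auto simp: abs_if split: if_split_asm)
  qed (simp_all add: d_def)
  moreover have "(\<Sum>i\<in>UNIV. 2 - \<bar>y i - z i\<bar>) = 2*d - L"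
    unfolding L_def by (simp add: sum_subtractf d_def)
  moreover have "(\<Sum>i\<in>UNIV. (2 - \<bar>y i - z i\<bar>)^2) = 4*d - 4*L + (\<Sum>i\<in>UNIV. (y i - z i)^2)"
  proof -
    have "(2 - \<bar>t\<bar>)^2 = 4 - 4*\<bar>t\<bar> + t^2" for t :: real
      by (simp add: power2_eq_square algebra_simps abs_mult_self_eq)
    then show ?thesis by (simp add: sum.distrib sum_subtractf sum_distrib_left[symmetric] L_def d_def)
  qed
  moreover have "(\<Sum>i\<in>UNIV. (y i + z i)^2) = (\<Sum>i\<in>UNIV. (y i - z i)^2) + 4*(\<Sum>i\<in>UNIV. y i * z i)"
    unfolding sum_distrib_left sum.distrib[symmetric] by (rule sum.cong) (simp_all add: power2_eq_square algebra_simps)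
  moreover have "(\<Sum>i\<in>UNIV. y i + z i)^2 = (P - N)^2 + 4*(\<Sum>i\<in>UNIV. y i)*(\<Sum>i\<in>UNIV. z i)"
    unfolding sum.distrib \<Delta>[symmetric] by (simp add: power2_eq_square algebra_simps)
  ultimately have "(d+1)*((P - N)^2 + 4*(\<Sum>i\<in>UNIV. y i)*(\<Sum>i\<in>UNIV. z i))
        - d*((\<Sum>i\<in>UNIV. (y i - z i)^2) + 4*(\<Sum>i\<in>UNIV. y i * z i))
      \<le> (d+1)*(2*d - L)^2 - d*(4*d - 4*L + (\<Sum>i\<in>UNIV. (y i - z i)^2))"
    by (simp only:)
  moreover have "(d+1)*(2*d - L)^2 - d*(4*d - 4*L) - (d+1)*(P - N)^2
      = 4*(d^3 - (d^2*(P + N) - (d+1)*P*N))"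
    unfolding L by (simp add: algebra_simps power2_eq_square power3_eq_cube)
  ultimately show ?thesis
    by (simp add: algebra_simps)
qed

lemma correlation_difference_le:
  fixes a y z :: "'n::finite \<Rightarrow> real"
  defines "d \<equiv> real CARD('n)"
    and "P \<equiv> (\<Sum>i\<in>UNIV. max 0 (y i - z i))" and "N \<equiv> (\<Sum>i\<in>UNIV. max 0 (z i - y i))"
  assumes d3: "3 \<le> d" and a1: "\<And>i. \<bar>a i\<bar> \<le> 1" and y1: "\<And>i. \<bar>y i\<bar> \<le> 1" and z1: "\<And>i. \<bar>z i\<bar> \<le> 1"
  shows "\<bar>(d+1)*(\<Sum>i\<in>UNIV. a i)*((\<Sum>i\<in>UNIV. y i) - (\<Sum>i\<in>UNIV. z i)) - d*(\<Sum>i\<in>UNIV. a i*(y i - z i))\<bar>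
    \<le> d^2*(P + N) - (d+1)*P*N"
proof -
  define p where "p i = max 0 (y i - z i)" for i
  define n where "n i = max 0 (z i - y i)" for i
  have PN: "P = sum p UNIV" "N = sum n UNIV" unfolding P_def N_def p_def n_def by simp_all
  have \<delta>: "y i - z i = p i - n i" for i unfolding p_def n_def by (simp add: max_def)
  then have \<Delta>: "(\<Sum>i\<in>UNIV. y i) - (\<Sum>i\<in>UNIV. z i) = P - N"
    unfolding PN sum_subtractf[symmetric] by simp
  have "(\<Sum>i\<in>UNIV. a i * ((d+1)*(P - N) - d*(p i - n i)))
      = (\<Sum>i\<in>UNIV. (d+1)*(P - N) * a i - d * (a i * (p i - n i)))"
    by (simp add: algebra_simps)
  also have "\<dots> = (d+1)*(P - N)*(\<Sum>i\<in>UNIV. a i) - d*(\<Sum>i\<in>UNIV. a i*(p i - n i))"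
    by (simp only: sum_subtractf sum_distrib_left)
  finally have "(d+1)*(\<Sum>i\<in>UNIV. a i)*((\<Sum>i\<in>UNIV. y i) - (\<Sum>i\<in>UNIV. z i)) - d*(\<Sum>i\<in>UNIV. a i*(y i - z i))
      = (\<Sum>i\<in>UNIV. a i * ((d+1)*(P - N) - d*(p i - n i)))"
    unfolding \<Delta> \<delta> by (simp add: mult.commute mult.left_commute)
  also have "\<bar>\<dots>\<bar> \<le> (\<Sum>i\<in>UNIV. \<bar>(d+1)*(P - N) - d*(p i - n i)\<bar>)"
    using a1 by (intro order_trans[OF sum_abs] sum_mono) (simp add: abs_mult mult_left_le_one_le)
  also have "\<dots> \<le> d^2*(P + N) - (d+1)*P*N"
  proof (unfold PN d_def, rule sum_abs_deviation_le)
    show "0 \<le> p i" "0 \<le> n i" "p i = 0 \<or> n i = 0" "p i + n i \<le> 2" for i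
      using y1[of i] z1[of i] by (auto simp: p_def n_def abs_le_iff)
  qed (use d3 d_def in simp)
  finally show ?thesis .
qed

lemma classical_werner_bound:
  fixes a y z :: "'n::finite \<Rightarrow> real"
  defines "d \<equiv> real CARD('n)"
  assumes d3: "3 \<le> d" and a1: "\<And>i. \<bar>a i\<bar> \<le> 1" and y1: "\<And>i. \<bar>y i\<bar> \<le> 1" and z1: "\<And>i. \<bar>z i\<bar> \<le> 1"
    and t: "(\<Sum>i\<in>UNIV. y i * z i) \<le> t"
  shows "\<bar>(d+1)/d^3 * (\<Sum>i\<in>UNIV. a i) * ((\<Sum>i\<in>UNIV. y i) - (\<Sum>i\<in>UNIV. z i))
            - 1/d^2 * (\<Sum>i\<in>UNIV. a i * (y i - z i))\<bar>
    \<le> 1 - ((d+1)/d^3 * (\<Sum>i\<in>UNIV. y i) * (\<Sum>i\<in>UNIV. z i) - 1/d^2 * t)"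
proof -
  let ?X = "(d+1)*(\<Sum>i\<in>UNIV. a i)*((\<Sum>i\<in>UNIV. y i) - (\<Sum>i\<in>UNIV. z i)) - d*(\<Sum>i\<in>UNIV. a i*(y i - z i))"
  let ?Y = "d^3 - (d+1)*(\<Sum>i\<in>UNIV. y i)*(\<Sum>i\<in>UNIV. z i) + d*(\<Sum>i\<in>UNIV. y i * z i)"
  have d0: "0 < d" using d3 by simp
  have "(d+1)/d^3 * (\<Sum>i\<in>UNIV. a i) * ((\<Sum>i\<in>UNIV. y i) - (\<Sum>i\<in>UNIV. z i))
      - 1/d^2 * (\<Sum>i\<in>UNIV. a i * (y i - z i)) = ?X / d^3"
    using d0 by (simp add: field_simps power2_eq_square power3_eq_cube)
  then have "\<bar>(d+1)/d^3 * (\<Sum>i\<in>UNIV. a i) * ((\<Sum>i\<in>UNIV. y i) - (\<Sum>i\<in>UNIV. z i))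
      - 1/d^2 * (\<Sum>i\<in>UNIV. a i * (y i - z i))\<bar> = \<bar>?X\<bar> / d^3"
    using d0 by simp
  also have "\<dots> \<le> ?Y / d^3"
    using order_trans[OF correlation_difference_le[of a y z] correlation_sum_ge[of y z]]
      d3 a1 y1 z1 d0
    unfolding d_def by (simp add: divide_right_mono)
  also have "\<dots> = 1 - (d+1)/d^3 * (\<Sum>i\<in>UNIV. y i) * (\<Sum>i\<in>UNIV. z i) + 1/d^2 * (\<Sum>i\<in>UNIV. y i * z i)"
    using d0 by (simp add: field_simps power2_eq_square power3_eq_cube)
  also have "\<dots> \<le> 1 - ((d+1)/d^3 * (\<Sum>i\<in>UNIV. y i) * (\<Sum>i\<in>UNIV. z i) - 1/d^2 * t)"
    using t by (simp add: divide_right_mono)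
  finally show ?thesis .
qed

section \<open>Hermitian inner product and the spectral theorem\<close>

definition cinner :: "complex^'n::finite \<Rightarrow> complex^'n \<Rightarrow> complex" where
  "cinner u v = (\<Sum>i\<in>UNIV. cnj (u$i) * v$i)"

definition conj_transpose :: "complex^'n::finite^'m::finite \<Rightarrow> complex^'m^'n" where
  "conj_transpose A = (\<chi> i j. cnj (A$j$i))"

lemma inner_eq_Re_cinner: "u \<bullet> v = Re (cinner u v)"
  unfolding cinner_def inner_vec_def inner_complex_def by (simp add: Re_sum)

lemma cinner_commute: "cinner v u = cnj (cinner u v)"
  unfolding cinner_def by (simp add: mult.commute)

lemma cinner_self: "cinner u u = of_real ((norm u)^2)"
proof -
  have "cinner u u = of_real (\<Sum>i\<in>UNIV. (cmod (u$i))^2)"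
    unfolding cinner_def of_real_sum by (intro sum.cong refl) (metis complex_norm_square mult.commute)
  moreover have "(norm u)^2 = (\<Sum>i\<in>UNIV. (cmod (u$i))^2)"
    unfolding norm_vec_def L2_set_def by (simp add: sum_nonneg)
  ultimately show ?thesis by simp
qed

lemma cinner_zero_right: "cinner u 0 = 0"
  unfolding cinner_def by simp

lemma cinner_add_right: "cinner u (v + w) = cinner u v + cinner u w"
  unfolding cinner_def by (simp add: distrib_left sum.distrib)

lemma cinner_diff_right: "cinner u (v - w) = cinner u v - cinner u w"
  unfolding cinner_def by (simp add: right_diff_distrib sum_subtractf)

lemma cinner_scaleR_right: "cinner u (r *\<^sub>R v) = of_real r * cinner u v"
  unfolding cinner_def vector_scaleR_component by (simp add: scaleR_conv_of_real sum_distrib_left mult.left_commute)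

lemma cinner_scaleR_left: "cinner (r *\<^sub>R u) v = of_real r * cinner u v"
  unfolding cinner_def vector_scaleR_component by (simp add: scaleR_conv_of_real sum_distrib_left mult.assoc)

lemma conj_transpose_mult_entry: "(conj_transpose U ** V)$i$j = cinner (column i U) (column j V)"
  unfolding conj_transpose_def cinner_def column_def matrix_matrix_mult_def by simp

lemma self_adjoint_cinner:
  assumes "self_adjoint D"
  shows "cinner u (D *v v) = cinner (D *v u) v"
proof -
  have "cinner u (D *v v) = (\<Sum>i\<in>UNIV. \<Sum>j\<in>UNIV. cnj (u$i) * D$i$j * v$j)"
    unfolding cinner_def matrix_vector_mult_def by (simp add: sum_distrib_left mult.assoc)
  also have "\<dots> = (\<Sum>j\<in>UNIV. \<Sum>i\<in>UNIV. cnj (D$j$i * u$i) * v$j)"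
  proof (subst sum.swap, intro sum.cong refl)
    fix i j
    have "D$i$j = cnj (D$j$i)" using assms unfolding self_adjoint_def by blast
    then show "cnj (u$i) * D$i$j * v$j = cnj (D$j$i * u$i) * v$j" by simp
  qed
  also have "\<dots> = cinner (D *v u) v"
    unfolding cinner_def matrix_vector_mult_def by (simp add: cnj_sum sum_distrib_right)
  finally show ?thesis .
qed

lemma self_adjoint_inner: "self_adjoint D \<Longrightarrow> x \<bullet> (D *v y) = (D *v x) \<bullet> y"
  unfolding inner_eq_Re_cinner by (simp add: self_adjoint_cinner)

lemma self_adjoint_diff: "self_adjoint A \<Longrightarrow> self_adjoint B \<Longrightarrow> self_adjoint (A - B)"
  unfolding self_adjoint_def by (metis complex_cnj_diff vector_minus_component)

lemma conj_transpose_mult_mult_entry: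
  "(conj_transpose U ** X ** U)$i$j = cinner (column i U) (X *v column j U)"
  unfolding conj_transpose_def cinner_def column_def matrix_matrix_mult_def matrix_vector_mult_def
  by (simp add: sum_distrib_left sum_distrib_right mult.assoc) (rule sum.swap)

lemma exists_nonzero_orthogonal:
  fixes u :: "'n::finite \<Rightarrow> complex^'n"
  assumes "x \<notin> S"
  shows "\<exists>v. v \<noteq> 0 \<and> (\<forall>i\<in>S. cinner (u i) v = 0)"
proof -
  define M :: "complex^'n^'n" where "M = (\<chi> j. if j \<in> S then (\<chi> k. cnj (u j $ k)) else 0)"
  have M_iff: "M *v v = 0 \<longleftrightarrow> (\<forall>i\<in>S. cinner (u i) v = 0)" for v
    unfolding M_def matrix_vector_mult_def cinner_def by (auto simp: vec_eq_iff)
  have "\<nexists>B. B ** M = mat 1"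
  proof
    assume "\<exists>B. B ** M = mat 1"
    then obtain B where "M ** B = mat 1" using matrix_left_right_inverse by blast
    moreover have "(M ** B)$x$x = 0" using assms unfolding M_def matrix_matrix_mult_def by simp
    ultimately show False by (simp add: mat_def)
  qed
  then obtain v where "v \<noteq> 0" "M *v v = 0" using matrix_left_invertible_ker by blast
  then show ?thesis using M_iff by blast
qed

lemma subspace_cinner_orthogonal: "subspace {v. \<forall>i\<in>S. cinner (u i) v = 0}"
  unfolding subspace_def by (simp add: cinner_zero_right cinner_add_right cinner_scaleR_right)

lemma quadratic_nonpos_imp_linear_zero:
  fixes a b :: real
  assumes "\<And>t. 2*t*a + t^2*b \<le> 0" and "0 \<le> a"
  shows "a = 0"
proof (rule ccontr)
  assume "a \<noteq> 0"
  then have a: "0 < a" using assms(2) by simp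
  define t where "t = a / (\<bar>b\<bar> + 1)"
  have t: "0 < t" "t * \<bar>b\<bar> < a"
    using a by (auto simp: t_def field_simps)
  have "t * (2*a + t*b) \<le> 0" using assms(1)[of t] by (simp add: algebra_simps power2_eq_square)
  moreover have "0 < 2*a + t*b" using t a abs_ge_self[of "-b"] mult_left_mono[of "-b" "\<bar>b\<bar>" t] by auto
  ultimately show False using t by (simp add: mult_le_0_iff)
qed

lemma self_adjoint_max_eigenvector:
  fixes D :: "complex^'n::finite^'n"
  assumes sa: "self_adjoint D" and W: "subspace W" and inv: "\<And>w. w \<in> W \<Longrightarrow> D *v w \<in> W"
    and vW: "v \<in> W" and nv: "norm v = 1"
    and max: "\<And>w. w \<in> W \<Longrightarrow> norm w = 1 \<Longrightarrow> w \<bullet> (D *v w) \<le> v \<bullet> (D *v v)"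
  shows "D *v v = (v \<bullet> (D *v v)) *\<^sub>R v"
proof -
  define \<mu> where "\<mu> = v \<bullet> (D *v v)"
  note D_linear = linear_scale[OF matrix_vector_mul_linear] matrix_vector_right_distrib
  have quad_le: "w \<bullet> (D *v w) \<le> \<mu> * (w \<bullet> w)" if "w \<in> W" for w
  proof (cases "w = 0")
    case False
    define w' where "w' = (1 / norm w) *\<^sub>R w"
    have "w' \<bullet> (D *v w') \<le> \<mu>"
      unfolding \<mu>_def using that False W by (intro max) (simp_all add: w'_def subspace_scale)
    then show ?thesis
      using False by (simp add: w'_def D_linear field_simps dot_square_norm power2_eq_square)
  qed simp
  \<comment> \<open>test the maximality of \<open>v\<close> along the line \<open>v + t r\<close>, which stays in \<open>W\<close>\<close>
  define r where "r = D *v v - \<mu> *\<^sub>R v"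
  have rW: "r \<in> W" unfolding r_def using W inv vW by (simp add: subspace_diff subspace_scale)
  have "2*t*(r \<bullet> r) + t^2*(r \<bullet> (D *v r) - \<mu> * (r \<bullet> r)) \<le> 0" for t
  proof -
    have "v + t *\<^sub>R r \<in> W" using W vW rW by (simp add: subspace_add subspace_scale)
    then have "(v + t *\<^sub>R r) \<bullet> (D *v (v + t *\<^sub>R r)) \<le> \<mu> * ((v + t *\<^sub>R r) \<bullet> (v + t *\<^sub>R r))"
      by (rule quad_le)
    moreover have "v \<bullet> (D *v r) = r \<bullet> (D *v v)"
      using self_adjoint_inner[OF sa, of v r] by (simp add: inner_commute)
    moreover have "r \<bullet> (D *v v) = r \<bullet> r + \<mu> * (r \<bullet> v)"
      unfolding r_def by (simp add: inner_diff_right)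
    moreover have "v \<bullet> v = 1" using nv by (simp add: dot_square_norm)
    ultimately show ?thesis
      by (simp add: D_linear \<mu>_def[symmetric] inner_add_left inner_add_right inner_commute[of v r]
          algebra_simps power2_eq_square)
  qed
  then have "r \<bullet> r = 0" by (rule quadratic_nonpos_imp_linear_zero) simp
  then show ?thesis unfolding r_def \<mu>_def by simp
qed

lemma self_adjoint_invariant_subspace_eigenvector:
  fixes D :: "complex^'n::finite^'n"
  assumes sa: "self_adjoint D" and W: "subspace W" and inv: "\<And>w. w \<in> W \<Longrightarrow> D *v w \<in> W"
    and "w \<in> W" "w \<noteq> 0"
  obtains v \<mu> where "v \<in> W" "norm v = 1" "D *v v = \<mu> *\<^sub>R v"
proof -
  define K where "K = sphere 0 1 \<inter> W"
  have "compact K" unfolding K_def using W by (simp add: compact_Int_closed closed_subspace)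
  moreover have "(1 / norm w) *\<^sub>R w \<in> K"
    unfolding K_def using assms(4,5) W by (simp add: subspace_scale)
  then have "K \<noteq> {}" by blast
  moreover have "continuous_on K (\<lambda>w. w \<bullet> (D *v w))" by (intro continuous_intros)
  ultimately obtain v where "v \<in> K" and "\<forall>w\<in>K. w \<bullet> (D *v w) \<le> v \<bullet> (D *v v)"
    using continuous_attains_sup by blast
  then have "v \<in> W" "norm v = 1" "D *v v = (v \<bullet> (D *v v)) *\<^sub>R v"
    using self_adjoint_max_eigenvector[OF sa W inv] by (auto simp: K_def)
  then show ?thesis by (rule that)
qed

lemma self_adjoint_orthonormal_eigenvectors:
  fixes D :: "complex^'n::finite^'n" and S :: "'n set"
  assumes sa: "self_adjoint D"
  shows "\<exists>u lam. (\<forall>i\<in>S. \<forall>j\<in>S. cinner (u i) (u j) = (if i = j then 1 else 0))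
    \<and> (\<forall>i\<in>S. D *v u i = lam i *\<^sub>R u i)"
  using finite[of S]
proof (induction S rule: finite_induct)
  case (insert x S)
  then obtain u lam where orth: "\<forall>i\<in>S. \<forall>j\<in>S. cinner (u i) (u j) = (if i = j then 1 else 0)"
    and eig: "\<forall>i\<in>S. D *v u i = lam i *\<^sub>R u i" by blast
  define W where "W = {v. \<forall>i\<in>S. cinner (u i) v = 0}"
  have inv: "D *v w \<in> W" if "w \<in> W" for w
    using that eig unfolding W_def by (simp add: self_adjoint_cinner[OF sa] cinner_scaleR_left)
  obtain w where "w \<in> W" "w \<noteq> 0"
    using exists_nonzero_orthogonal[OF insert(2)] unfolding W_def by blast
  then obtain v \<mu> where v: "v \<in> W" "norm v = 1" "D *v v = \<mu> *\<^sub>R v"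
    using self_adjoint_invariant_subspace_eigenvector[OF sa subspace_cinner_orthogonal[of S u, folded W_def] inv]
    by blast
  have "cinner v v = 1" "\<forall>i\<in>S. cinner (u i) v = 0 \<and> cinner v (u i) = 0"
    using v unfolding W_def by (simp_all add: cinner_self cinner_commute[of v])
  then show ?case
    using orth eig v insert(2)
    by (intro exI[of _ "u(x := v)"] exI[of _ "lam(x := \<mu>)"]) auto
qed simp

lemma self_adjoint_unitary_diagonalization:
  fixes D :: "complex^'n::finite^'n"
  assumes sa: "self_adjoint D"
  obtains U :: "complex^'n^'n" and lam where "conj_transpose U ** U = mat 1"
    and "\<And>i j. (conj_transpose U ** D ** U)$i$j = (if i = j then of_real (lam i) else 0)"
proof -
  obtain u :: "'n \<Rightarrow> complex^'n" and lam
    where orth: "\<And>i j. cinner (u i) (u j) = (if i = j then 1 else 0)"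
      and eig: "\<And>i. D *v u i = lam i *\<^sub>R u i"
    using self_adjoint_orthonormal_eigenvectors[OF sa, of UNIV] by auto
  define U :: "complex^'n^'n" where "U = (\<chi> i j. u j $ i)"
  have col: "column j U = u j" for j unfolding U_def column_def by (simp add: vec_eq_iff)
  show ?thesis
  proof
    show "conj_transpose U ** U = mat 1"
      by (simp add: vec_eq_iff mat_def conj_transpose_mult_entry col orth)
    show "(conj_transpose U ** D ** U)$i$j = (if i = j then of_real (lam i) else 0)" for i j
      by (simp add: conj_transpose_mult_mult_entry col eig cinner_scaleR_right orth)
  qed
qed

section \<open>Traces in an eigenbasis\<close>

lemma self_adjoint_diagonal_real:
  assumes "self_adjoint X"
  shows "X$i$i = of_real (Re (X$i$i))"
proof -
  have "X$i$i = cnj (X$i$i)" using assms unfolding self_adjoint_def by blast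
  then have "Im (X$i$i) = 0" by (metis cnj.simps(2) neg_equal_zero)
  then show ?thesis by (simp add: complex_eq_iff)
qed

lemma self_adjoint_unitary_conj:
  assumes "self_adjoint X"
  shows "self_adjoint (conj_transpose U ** X ** U)"
  unfolding self_adjoint_def conj_transpose_mult_mult_entry
proof (intro allI)
  fix i j
  have "cinner (column i U) (X *v column j U) = cinner (X *v column i U) (column j U)"
    by (rule self_adjoint_cinner[OF assms])
  also have "\<dots> = cnj (cinner (column j U) (X *v column i U))"
    by (rule cinner_commute)
  finally show "cinner (column i U) (X *v column j U) = cnj (cinner (column j U) (X *v column i U))" .
qed

lemma unitary_column_norm:
  fixes U :: "complex^'n::finite^'n"
  assumes "conj_transpose U ** U = mat 1"
  shows "norm (column i U) = 1"
proof -
  have "cinner (column i U) (column i U) = 1"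
    using assms conj_transpose_mult_entry[of U U i i] by (simp add: mat_def)
  then have "(norm (column i U))^2 = 1" unfolding cinner_self by (simp only: of_real_eq_1_iff)
  then show ?thesis using norm_ge_zero[of "column i U"] by (auto simp: power2_eq_1_iff)
qed

lemma unitary_conj_diagonal_bound:
  fixes U :: "complex^'n::finite^'n"
  assumes "conj_transpose U ** U = mat 1" and "op_norm X \<le> 1"
  shows "\<bar>Re ((conj_transpose U ** X ** U)$i$i)\<bar> \<le> 1"
proof -
  have "norm (X *v column i U) \<le> onorm ((*v) X) * norm (column i U)"
    by (rule onorm[OF matrix_vector_mul_bounded_linear])
  also have "\<dots> \<le> 1"
    using assms unitary_column_norm[OF assms(1)] unfolding op_norm_def by simp
  finally have "\<bar>column i U \<bullet> (X *v column i U)\<bar> \<le> 1"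
    using Cauchy_Schwarz_ineq2[of "column i U" "X *v column i U"] unitary_column_norm[OF assms(1)]
    by simp
  then show ?thesis by (simp add: conj_transpose_mult_mult_entry inner_eq_Re_cinner)
qed

lemma trace_unitary_conj:
  fixes U :: "complex^'n::finite^'n"
  assumes "conj_transpose U ** U = mat 1"
  shows "trace (conj_transpose U ** X ** U) = trace X"
proof -
  have "U ** conj_transpose U = mat 1" using assms matrix_left_right_inverse by blast
  then have "trace (U ** (conj_transpose U ** X)) = trace X"
    by (simp add: matrix_mul_assoc)
  then show ?thesis by (simp add: trace_mul_sym[of _ U])
qed

lemma unitary_conj_mult:
  fixes U :: "complex^'n::finite^'n"
  assumes "conj_transpose U ** U = mat 1"
  shows "conj_transpose U ** (X ** Y) ** U
    = (conj_transpose U ** X ** U) ** (conj_transpose U ** Y ** U)"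
proof -
  have "U ** conj_transpose U = mat 1" using assms matrix_left_right_inverse by blast
  then show ?thesis by (simp add: matrix_mul_assoc) (metis matrix_mul_assoc matrix_mul_rid)
qed

lemma trace_mult_diff_right:
  fixes X Y Z :: "'a::comm_ring_1^'n::finite^'n"
  shows "trace (X ** (Y - Z)) = trace (X ** Y) - trace (X ** Z)"
  unfolding trace_def matrix_matrix_mult_def by (simp add: right_diff_distrib sum_subtractf)

lemma trace_mult_diagonal:
  assumes "\<And>i j. i \<noteq> j \<Longrightarrow> D$i$j = 0"
  shows "trace (X ** D) = (\<Sum>i\<in>UNIV. X$i$i * D$i$i)"
proof -
  have "(\<Sum>k\<in>UNIV. X$i$k * D$k$i) = (\<Sum>k\<in>UNIV. if k = i then X$i$i * D$i$i else 0)" for i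
    using assms by (intro sum.cong) auto
  then show ?thesis by (simp add: trace_def matrix_matrix_mult_def)
qed

lemma Re_trace_mult_ge_diagonal:
  assumes sa: "self_adjoint X" and offdiag: "\<And>i j. i \<noteq> j \<Longrightarrow> Y$i$j = X$i$j"
  shows "(\<Sum>i\<in>UNIV. Re (X$i$i) * Re (Y$i$i)) \<le> Re (trace (X ** Y))"
proof -
  have diag_le: "Re (X$i$i) * Re (Y$i$i) \<le> (\<Sum>k\<in>UNIV. Re (X$i$k * Y$k$i))" for i
  proof -
    have "Re (X$i$k * Y$k$i) = (cmod (X$i$k))^2" if "k \<noteq> i" for k
    proof -
      have "Y$k$i = cnj (X$i$k)" using sa offdiag[OF that] unfolding self_adjoint_def by metis
      then show ?thesis by (simp flip: complex_norm_square)
    qed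
    then have "0 \<le> (\<Sum>k\<in>UNIV-{i}. Re (X$i$k * Y$k$i))" by (simp add: sum_nonneg)
    moreover have "Re (X$i$i * Y$i$i) = Re (X$i$i) * Re (Y$i$i)"
      by (subst self_adjoint_diagonal_real[OF sa, of i]) simp
    moreover have "(\<Sum>k\<in>UNIV. Re (X$i$k * Y$k$i))
        = Re (X$i$i * Y$i$i) + (\<Sum>k\<in>UNIV-{i}. Re (X$i$k * Y$k$i))"
      by (rule sum.remove) simp_all
    ultimately show ?thesis by linarith
  qed
  have "(\<Sum>i\<in>UNIV. Re (X$i$i) * Re (Y$i$i)) \<le> (\<Sum>i\<in>UNIV. \<Sum>k\<in>UNIV. Re (X$i$k * Y$k$i))"
    by (intro sum_mono diag_le)
  also have "\<dots> = Re (trace (X ** Y))"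
    by (simp add: trace_def matrix_matrix_mult_def Re_sum)
  finally show ?thesis .
qed

lemma trace_unitary_conj_real_diagonal:
  fixes U :: "complex^'n::finite^'n"
  assumes U: "conj_transpose U ** U = mat 1" and "self_adjoint X"
  shows "trace X = of_real (\<Sum>i\<in>UNIV. Re ((conj_transpose U ** X ** U)$i$i))"
proof -
  have "trace X = (\<Sum>i\<in>UNIV. (conj_transpose U ** X ** U)$i$i)"
    using trace_unitary_conj[OF U, of X] by (simp add: trace_def)
  also have "\<dots> = (\<Sum>i\<in>UNIV. of_real (Re ((conj_transpose U ** X ** U)$i$i)))"
    using self_adjoint_diagonal_real[OF self_adjoint_unitary_conj[OF assms(2)]] by (intro sum.cong) blast+
  finally show ?thesis by simp
qed

lemma eigenbasis_diagonal_reduction: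
  fixes A B C :: "complex^'n::finite^'n"
  assumes sa: "self_adjoint A" "self_adjoint B" "self_adjoint C"
    and contr: "op_norm A \<le> 1" "op_norm B \<le> 1" "op_norm C \<le> 1"
  obtains a b c :: "'n \<Rightarrow> real"
  where "\<And>i. \<bar>a i\<bar> \<le> 1" "\<And>i. \<bar>b i\<bar> \<le> 1" "\<And>i. \<bar>c i\<bar> \<le> 1"
    and "trace A = of_real (\<Sum>i\<in>UNIV. a i)" "trace B = of_real (\<Sum>i\<in>UNIV. b i)"
      "trace C = of_real (\<Sum>i\<in>UNIV. c i)"
    and "trace (A ** B) - trace (A ** C) = of_real (\<Sum>i\<in>UNIV. a i * (b i - c i))"
    and "(\<Sum>i\<in>UNIV. b i * c i) \<le> Re (trace (B ** C))"
proof -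
  obtain U :: "complex^'n^'n" and lam where U: "conj_transpose U ** U = mat 1"
    and diag: "\<And>i j. (conj_transpose U ** (B - C) ** U)$i$j = (if i = j then of_real (lam i) else 0)"
    using self_adjoint_unitary_diagonalization[OF self_adjoint_diff[OF sa(2,3)]] by blast
  define T where "T X = conj_transpose U ** X ** U" for X
  have diagT: "T (B - C) $i$j = (if i = j then of_real (lam i) else 0)" for i j
    using diag unfolding T_def .
  have T_diff: "T (B - C) $i$j = T B $i$j - T C $i$j" for i j
    by (simp only: T_def conj_transpose_mult_mult_entry matrix_vector_mult_diff_rdistrib cinner_diff_right)
  have T_real: "T X $i$i = of_real (Re (T X $i$i))" if "self_adjoint X" for X i
    unfolding T_def by (rule self_adjoint_diagonal_real[OF self_adjoint_unitary_conj[OF that]])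
  define a b c where "a i = Re (T A $i$i)" and "b i = Re (T B $i$i)" and "c i = Re (T C $i$i)" for i
  show ?thesis
  proof
    show "\<bar>a i\<bar> \<le> 1" "\<bar>b i\<bar> \<le> 1" "\<bar>c i\<bar> \<le> 1" for i
      unfolding a_def b_def c_def T_def using unitary_conj_diagonal_bound[OF U] contr by auto
    show "trace A = of_real (\<Sum>i\<in>UNIV. a i)" "trace B = of_real (\<Sum>i\<in>UNIV. b i)"
      "trace C = of_real (\<Sum>i\<in>UNIV. c i)"
      unfolding a_def b_def c_def T_def by (simp_all add: trace_unitary_conj_real_diagonal[OF U] sa)
    have "trace (A ** B) - trace (A ** C) = trace (T A ** (T B - T C))"
      unfolding T_def trace_mult_diff_right unitary_conj_mult[OF U, symmetric] trace_unitary_conj[OF U] ..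
    also have "\<dots> = (\<Sum>i\<in>UNIV. T A $i$i * (T B $i$i - T C $i$i))"
      using diagT T_diff by (subst trace_mult_diagonal) auto
    also have "\<dots> = of_real (\<Sum>i\<in>UNIV. a i * (b i - c i))"
      unfolding a_def b_def c_def by (subst (1 2 3) T_real) (simp_all add: sa)
    finally show "trace (A ** B) - trace (A ** C) = of_real (\<Sum>i\<in>UNIV. a i * (b i - c i))" .
    have "T C $i$j = T B $i$j" if "i \<noteq> j" for i j
      using diagT[of i j] T_diff[of i j] that by simp
    then have "(\<Sum>i\<in>UNIV. b i * c i) \<le> Re (trace (T B ** T C))"
      unfolding b_def c_def T_def by (intro Re_trace_mult_ge_diagonal self_adjoint_unitary_conj sa)
    then show "(\<Sum>i\<in>UNIV. b i * c i) \<le> Re (trace (B ** C))"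
      unfolding T_def unitary_conj_mult[OF U, symmetric] trace_unitary_conj[OF U] .
  qed
qed

section \<open>The Werner state\<close>

lemma werner_entry:
  defines "d \<equiv> real CARD('n::finite)"
  shows "(werner :: complex^('n \<times> 'n)^('n \<times> 'n)) $ p $ q =
     (if q = p then of_real ((d+1)/d^3) else 0) - (if q = (snd p, fst p) then of_real (1/d^2) else 0)"
proof -
  have "(fst p = snd q \<and> snd p = fst q) \<longleftrightarrow> q = (snd p, fst p)" by auto
  then show ?thesis by (simp add: werner_def Let_def flip_op_def mat_def d_def eq_commute[of p q])
qed

lemma trace_werner_kron:
  fixes A B :: "complex^'n::finite^'n"
  defines "d \<equiv> real CARD('n)"
  shows "trace (werner ** kron A B)
    = of_real ((d+1)/d^3) * (trace A * trace B) - of_real (1/d^2) * trace (A ** B)"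
proof -
  define K where "K = kron A B"
  have "(\<Sum>q\<in>UNIV. werner$p$q * K$q$p)
      = of_real ((d+1)/d^3) * K$p$p - of_real (1/d^2) * K$(snd p, fst p)$p" for p
  proof -
    have "(\<Sum>q\<in>UNIV. werner$p$q * K$q$p) = (\<Sum>q\<in>UNIV.
        (if q = p then of_real ((d+1)/d^3) * K$q$p else 0)
        - (if q = (snd p, fst p) then of_real (1/d^2) * K$q$p else 0))"
      by (intro sum.cong) (simp_all add: werner_entry d_def left_diff_distrib)
    also have "\<dots> = of_real ((d+1)/d^3) * K$p$p - of_real (1/d^2) * K$(snd p, fst p)$p"
      by (simp only: sum_subtractf sum.delta finite UNIV_I if_True)
    finally show ?thesis .
  qed
  then have "trace (werner ** K)
      = (\<Sum>p\<in>UNIV. of_real ((d+1)/d^3) * K$p$p - of_real (1/d^2) * K$(snd p, fst p)$p)"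
    unfolding trace_def matrix_matrix_mult_def by simp
  also have "\<dots> = of_real ((d+1)/d^3) * (\<Sum>p\<in>UNIV. K$p$p) - of_real (1/d^2) * (\<Sum>p\<in>UNIV. K$(snd p, fst p)$p)"
    by (simp add: sum_subtractf sum_distrib_left)
  also have "(\<Sum>p\<in>UNIV. K$p$p) = trace A * trace B"
  proof -
    have "(\<Sum>p\<in>UNIV. K$p$p) = (\<Sum>(i, j)\<in>UNIV \<times> UNIV. A$i$i * B$j$j)"
      unfolding K_def kron_def UNIV_Times_UNIV by (simp add: case_prod_beta)
    then show ?thesis by (simp add: trace_def sum_product sum.cartesian_product)
  qed
  also have "(\<Sum>p\<in>UNIV. K$(snd p, fst p)$p) = trace (A ** B)"
  proof -
    have "(\<Sum>p\<in>UNIV. K$(snd p, fst p)$p) = (\<Sum>(i, j)\<in>UNIV \<times> UNIV. A$j$i * B$i$j)"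
      unfolding K_def kron_def UNIV_Times_UNIV by (simp add: case_prod_beta)
    also have "\<dots> = (\<Sum>i\<in>UNIV. \<Sum>j\<in>UNIV. A$j$i * B$i$j)" by (simp add: sum.cartesian_product)
    also have "\<dots> = trace (A ** B)"
      unfolding trace_def matrix_matrix_mult_def by simp (rule sum.swap)
    finally show ?thesis .
  qed
  finally show ?thesis unfolding K_def .
qed

lemma trace_werner_kron_diff:
  fixes A B C :: "complex^'n::finite^'n"
  defines "d \<equiv> real CARD('n)"
  shows "trace (werner ** kron A B) - trace (werner ** kron A C)
    = of_real ((d+1)/d^3) * (trace A * (trace B - trace C))
      - of_real (1/d^2) * (trace (A ** B) - trace (A ** C))"
proof -
  have "c * (x * u) - e * p - (c * (x * v) - e * q) = c * (x * (u - v)) - e * (p - q)"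
    for c e x u v p q :: complex
    by (simp add: algebra_simps)
  then show ?thesis unfolding trace_werner_kron d_def .
qed

theorem mainTheorem2:
  fixes Ja Jb1 Jb2 :: "complex^'n^'n"
  assumes "CARD('n) \<ge> 3"
    and "self_adjoint Ja" and "self_adjoint Jb1" and "self_adjoint Jb2"
    and "op_norm Ja \<le> 1" and "op_norm Jb1 \<le> 1" and "op_norm Jb2 \<le> 1"
  shows "cmod (trace (werner ** kron Ja Jb1) - trace (werner ** kron Ja Jb2))
           \<le> 1 - Re (trace (werner ** kron Jb1 Jb2))"
proof -
  obtain a y z :: "'n::finite \<Rightarrow> real"
    where bounds: "\<And>i. \<bar>a i\<bar> \<le> 1" "\<And>i. \<bar>y i\<bar> \<le> 1" "\<And>i. \<bar>z i\<bar> \<le> 1"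
      and traces: "trace Ja = of_real (\<Sum>i\<in>UNIV. a i)" "trace Jb1 = of_real (\<Sum>i\<in>UNIV. y i)"
        "trace Jb2 = of_real (\<Sum>i\<in>UNIV. z i)"
      and trace_diff: "trace (Ja ** Jb1) - trace (Ja ** Jb2) = of_real (\<Sum>i\<in>UNIV. a i * (y i - z i))"
      and trace_prod: "(\<Sum>i\<in>UNIV. y i * z i) \<le> Re (trace (Jb1 ** Jb2))"
    using eigenbasis_diagonal_reduction[OF assms(2-7)] by blast
  define d where "d = real CARD('n)"
  have "trace (werner ** kron Ja Jb1) - trace (werner ** kron Ja Jb2)
      = of_real ((d+1)/d^3 * (\<Sum>i\<in>UNIV. a i) * ((\<Sum>i\<in>UNIV. y i) - (\<Sum>i\<in>UNIV. z i))
          - 1/d^2 * (\<Sum>i\<in>UNIV. a i * (y i - z i)))"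
    unfolding trace_werner_kron_diff traces trace_diff d_def by simp
  moreover have "Re (trace (werner ** kron Jb1 Jb2))
      = (d+1)/d^3 * (\<Sum>i\<in>UNIV. y i) * (\<Sum>i\<in>UNIV. z i) - 1/d^2 * Re (trace (Jb1 ** Jb2))"
    by (simp add: trace_werner_kron traces d_def)
  ultimately show ?thesis
    using classical_werner_bound[of a y z, OF _ bounds trace_prod] assms(1)
    by (simp only: norm_of_real d_def of_nat_le_iff of_nat_numeral)
qed

end
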